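(* Let $H=\langle a,b\mid a^2=ba^2b\rangle$. Then $H$ is reduced and atomic with $\mathcal A(H)=\{a,b\}$, and $\rho_k(H)=\infty$ for all $k\ge 2$.
   Context: $H$ is the monoid presented by generators $a,b$ and the single relation $a^2=ba^2b$. $\mathcal A(H)$ is its set of atoms (irreducible non-units). For $c\in H$, $\mathsf L(c)$ is the set of all $k$ such that $c$ is a product of $k$ atoms; $\mathcal U_k(H)$ is the union of all $\mathsf L(c)$ containing $k$, and $\rho_k(H)=\sup\mathcal U_k(H)$. *)

theory Defs
  imports Main "HOL-Library.Extended_Nat"
begin

definition mon_unit :: "'a::monoid_mult \<Rightarrow> bool" where
  "mon_unit x \<longleftrightarrow> (\<exists>y. x * y = 1 \<and> y * x = 1)"

definition atoms :: "'a::monoid_mult set" where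
  "atoms = {x. \<not> mon_unit x \<and> (\<forall>y z. x = y * z \<longrightarrow> mon_unit y \<or> mon_unit z)}"

definition reduced :: "'a::monoid_mult itself \<Rightarrow> bool" where
  "reduced _ \<longleftrightarrow> (\<forall>u::'a. mon_unit u \<longrightarrow> u = 1)"

definition atomic :: "'a::monoid_mult itself \<Rightarrow> bool" where
  "atomic _ \<longleftrightarrow> (\<forall>x::'a. \<not> mon_unit x \<longrightarrow>
      (\<exists>xs. set xs \<subseteq> atoms \<and> prod_list xs = x))"

definition lengths :: "'a::monoid_mult \<Rightarrow> nat set" where
  "lengths c = {k. \<exists>xs. length xs = k \<and> set xs \<subseteq> atoms \<and> prod_list xs = c}"

definition unions_of_lengths :: "'a::monoid_mult itself \<Rightarrow> nat \<Rightarrow> nat set" where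
  "unions_of_lengths _ k = \<Union> {lengths (c::'a) | c. k \<in> lengths c}"

definition rho :: "'a::monoid_mult itself \<Rightarrow> nat \<Rightarrow> enat" where
  "rho T k = Sup (enat ` unions_of_lengths T k)"

datatype gen = GA | GB

inductive eqv :: "gen list \<Rightarrow> gen list \<Rightarrow> bool" where
  rel: "eqv (u @ [GA, GA] @ v) (u @ [GB, GA, GA, GB] @ v)"
| refl: "eqv w w"
| sym: "eqv w w' \<Longrightarrow> eqv w' w"
| trans: "eqv w w' \<Longrightarrow> eqv w' w'' \<Longrightarrow> eqv w w''"

lemma eqv_equivp: "equivp eqv"
  by (rule equivpI) (auto simp: reflp_def symp_def transp_def intro: eqv.intros)

lemma eqv_app_right: "eqv x y \<Longrightarrow> eqv (x @ w) (y @ w)"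
proof (induction rule: eqv.induct)
  case (rel u v) then show ?case using eqv.rel[of u "v @ w"] by simp
qed (auto intro: eqv.intros)

lemma eqv_app_left: "eqv x y \<Longrightarrow> eqv (w @ x) (w @ y)"
proof (induction rule: eqv.induct)
  case (rel u v) then show ?case using eqv.rel[of "w @ u" v] by simp
qed (auto intro: eqv.intros)

quotient_type H = "gen list" / eqv
  by (rule eqv_equivp)

instantiation H :: monoid_mult
begin

lift_definition one_H :: H is "[]" .

lift_definition times_H :: "H \<Rightarrow> H \<Rightarrow> H" is "(@)"
  by (meson eqv.trans eqv_app_left eqv_app_right)

instance
  by standard (transfer; simp add: eqv.refl)+

end

lift_definition gen_a :: H is "[GA]" .
lift_definition gen_b :: H is "[GB]" .

end

theory Submission
  imports Defs
begin

text \<open>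
  The defining relation preserves the number of letters a, so a word with at most one a is
  congruent only to itself. Hence the empty word is alone in its class, which makes H reduced,
  and a and b are atoms; as every element is a word in a and b, these are all the atoms.
  On the other hand, iterating the relation gives a a = b^n a a b^n, so the element
  a a b^(k-2), which has a factorization of length k, has factorizations of every length k + 2n.
\<close>

lemma Sup_enat_image_infinite:
  assumes "infinite A"
  shows "Sup (enat ` A) = \<infinity>"
proof -
  have "infinite (enat ` A)"
    using assms by (auto dest: finite_imageD simp: inj_on_def)
  then show ?thesis
    by (auto simp: Sup_enat_def)
qed

lemma rho_eq_infinity_if_infinite_lengths:
  fixes c :: "'a::monoid_mult"
  assumes "k \<in> lengths c" and "infinite (lengths c)"
  shows "rho TYPE('a) k = \<infinity>"
proof -
  have "lengths c \<subseteq> unions_of_lengths TYPE('a) k"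
    using assms(1) unfolding unions_of_lengths_def by blast
  then have "infinite (unions_of_lengths TYPE('a) k)"
    using assms(2) finite_subset by blast
  then show ?thesis
    unfolding rho_def by (rule Sup_enat_image_infinite)
qed

definition count_a :: "gen list \<Rightarrow> nat" where
  "count_a w = length (filter ((=) GA) w)"

lemma eqv_count_a_invariant:
  "eqv w w' \<Longrightarrow> count_a w = count_a w' \<and> (count_a w \<le> 1 \<longrightarrow> w = w')"
proof (induction rule: eqv.induct)
  case (rel u v)
  then show ?case by (simp add: count_a_def)
next
  case (refl w)
  then show ?case by simp
next
  case (sym w w')
  then show ?case by metis
next
  case (trans w w' w'')
  then show ?case by metis
qed

lemma eqv_rigid: "eqv w w' \<Longrightarrow> count_a w \<le> 1 \<Longrightarrow> w = w'"
  using eqv_count_a_invariant by blast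

lemma eqv_conjugate_replicate_b:
  "eqv (replicate n GB @ [GA, GA] @ replicate n GB) [GA, GA]"
proof (induction n)
  case 0
  show ?case by (simp add: eqv.refl)
next
  case (Suc n)
  have "replicate (Suc n) GB @ [GA, GA] @ replicate (Suc n) GB
      = replicate n GB @ [GB, GA, GA, GB] @ replicate n GB"
    by (simp add: replicate_app_Cons_same)
  then show ?case
    using eqv.trans[OF eqv.sym[OF eqv.rel] Suc.IH] by simp
qed

lemma H_cases: obtains w where "x = abs_H w"
  by (induct x rule: H.abs_induct) auto

lemma times_abs_H: "abs_H u * abs_H w = abs_H (u @ w)"
  by (simp add: times_H.abs_eq)

lemma abs_H_eq_1_iff: "abs_H w = 1 \<longleftrightarrow> w = []"
proof
  assume "abs_H w = 1"
  then have "eqv w []"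
    by (simp add: one_H.abs_eq H.abs_eq_iff)
  then show "w = []"
    using eqv_rigid[OF eqv.sym] by (fastforce simp: count_a_def)
qed (simp add: one_H.abs_eq)

lemma mon_unit_H_iff: "mon_unit (x :: H) \<longleftrightarrow> x = 1"
proof
  assume "mon_unit x"
  then obtain y where "x * y = 1"
    by (auto simp: mon_unit_def)
  moreover obtain u where x: "x = abs_H u" by (rule H_cases)
  moreover obtain w where "y = abs_H w" by (rule H_cases)
  ultimately have "u @ w = []"
    by (simp add: times_abs_H abs_H_eq_1_iff)
  then show "x = 1"
    using x by (simp add: one_H.abs_eq)
qed (auto simp: mon_unit_def)

fun letter :: "gen \<Rightarrow> H" where
  "letter GA = gen_a"
| "letter GB = gen_b"

lemma letter_eq_abs_H: "letter g = abs_H [g]"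
  by (cases g) (simp_all add: gen_a.abs_eq gen_b.abs_eq)

lemma prod_list_map_letter: "prod_list (map letter w) = abs_H w"
proof (induction w)
  case Nil
  show ?case by (simp add: one_H.abs_eq)
next
  case (Cons g w)
  then show ?case
    by (simp add: letter_eq_abs_H times_abs_H)
qed

lemma letter_in_atoms: "letter g \<in> atoms"
proof -
  have "mon_unit y \<or> mon_unit z" if "letter g = y * z" for y z
  proof -
    obtain u where y: "y = abs_H u" by (rule H_cases)
    obtain w where z: "z = abs_H w" by (rule H_cases)
    have "eqv [g] (u @ w)"
      using that y z by (simp add: letter_eq_abs_H times_abs_H H.abs_eq_iff)
    moreover have "count_a [g] \<le> 1"
      by (simp add: count_a_def)
    ultimately have "u @ w = [g]"
      using eqv_rigid by metis
    then have "u = [] \<or> w = []"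
      by (cases u) auto
    then show ?thesis
      using y z by (auto simp: mon_unit_H_iff abs_H_eq_1_iff)
  qed
  then show ?thesis
    by (auto simp: atoms_def mon_unit_H_iff letter_eq_abs_H abs_H_eq_1_iff)
qed

lemma atoms_H: "(atoms :: H set) = {gen_a, gen_b}"
proof
  show "{gen_a, gen_b} \<subseteq> (atoms :: H set)"
    using letter_in_atoms[of GA] letter_in_atoms[of GB] by simp
  show "(atoms :: H set) \<subseteq> {gen_a, gen_b}"
  proof
    fix x :: H
    assume x_atom: "x \<in> atoms"
    obtain w where x: "x = abs_H w" by (rule H_cases)
    with x_atom obtain g w' where w: "w = g # w'"
      by (cases w) (auto simp: atoms_def mon_unit_H_iff one_H.abs_eq)
    then have "x = letter g * abs_H w'"
      using x by (simp add: letter_eq_abs_H times_abs_H)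
    with x_atom have "mon_unit (letter g) \<or> mon_unit (abs_H w')"
      by (simp add: atoms_def)
    moreover have "\<not> mon_unit (letter g)"
      by (simp add: mon_unit_H_iff letter_eq_abs_H abs_H_eq_1_iff)
    ultimately have "x = letter g"
      using \<open>x = letter g * abs_H w'\<close> by (simp add: mon_unit_H_iff)
    then show "x \<in> {gen_a, gen_b}"
      by (cases g) auto
  qed
qed

lemma atomic_H: "atomic TYPE(H)"
  unfolding atomic_def
proof (intro allI impI)
  fix x :: H
  obtain w where "x = abs_H w" by (rule H_cases)
  then show "\<exists>xs. set xs \<subseteq> atoms \<and> prod_list xs = x"
    using letter_in_atoms prod_list_map_letter by (intro exI[of _ "map letter w"]) auto
qed

lemma length_in_lengths: "length w \<in> lengths (abs_H w)"
  unfolding lengths_def using letter_in_atoms prod_list_map_letter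
  by (intro CollectI exI[of _ "map letter w"]) auto

lemma infinite_lengths_aa_append:
  "infinite (lengths (abs_H ([GA, GA] @ w)))"
proof -
  let ?c = "abs_H ([GA, GA] @ w)"
  have "n + n + length w + 2 \<in> lengths ?c" for n
  proof -
    let ?w = "replicate n GB @ [GA, GA] @ replicate n GB @ w"
    have "eqv ?w ([GA, GA] @ w)"
      using eqv_app_right[OF eqv_conjugate_replicate_b, of n w] by simp
    then have "abs_H ?w = ?c"
      by (simp only: H.abs_eq_iff)
    then show ?thesis
      using length_in_lengths[of ?w] by (simp add: add.assoc)
  qed
  moreover have "m \<le> m + m + length w + 2" for m :: nat
    by simp
  ultimately show ?thesis
    unfolding infinite_nat_iff_unbounded_le by blast
qed

theorem mainTheorem6:
  shows "reduced TYPE(H) \<and> atomic TYPE(H) \<and> (atoms :: H set) = {gen_a, gen_b} \<and>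
         (\<forall>k\<ge>2. rho TYPE(H) k = \<infinity>)"
proof (intro conjI allI impI)
  show "reduced TYPE(H)"
    by (simp add: reduced_def mon_unit_H_iff)
  show "atomic TYPE(H)" by (rule atomic_H)
  show "(atoms :: H set) = {gen_a, gen_b}" by (rule atoms_H)
  fix k :: nat
  assume "2 \<le> k"
  then obtain m where "k = m + 2"
    using le_Suc_ex by (metis add.commute)
  then have "k \<in> lengths (abs_H ([GA, GA] @ replicate m GB))"
    using length_in_lengths[of "[GA, GA] @ replicate m GB"] by simp
  then show "rho TYPE(H) k = \<infinity>"
    using infinite_lengths_aa_append by (rule rho_eq_infinity_if_infinite_lengths)
qed

end
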